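(* Haechi (described in the context) provides finalization fairness for a sharded system: for any order-sensitive contract $\epsilon$ and any two transactions $TX^1_{\mapsto\epsilon_1}$, $TX^2_{\mapsto\epsilon_2}$ with $\epsilon\in\Upsilon(TX^1_{\mapsto\epsilon_1})\cap\Upsilon(TX^2_{\mapsto\epsilon_2})$, if $TX^1_{\mapsto\epsilon_1}\prec_{\mathbf P} TX^2_{\mapsto\epsilon_2}$ then $TX^1_{\mapsto\epsilon_1}\prec_{\mathbf E} TX^2_{\mapsto\epsilon_2}$.
   Context: Setting. A sharded blockchain has shards $S_1,\dots,S_m$, each running a BFT consensus with fewer than one third Byzantine nodes, plus a beacon shard $S_0$ maintaining a beacon chain. Shard $S_i$ maintains a chain $SC_i$, $SC_i^h$ being its block at height $h$; each block carries a publicly verifiable block timestamp $f_{bt}(\cdot)$, strictly increasing with height within a shard; $f_{idx}(\cdot)$ gives a transaction's index in its block. $TX_{\mapsto\epsilon}$ denotes a transaction calling contract $\epsilon$; $\Upsilon(TX_{\mapsto\epsilon})$ is the set of contracts called when executing $\epsilon$, and $TX_{\mapsto\epsilon,\epsilon_k}$ the sub-transaction calling $\epsilon_k$. Processing order: $TX^1\prec_{\mathbf P}TX^2$ if (i) both are in the same block and $f_{idx}(TX^1)<f_{idx}(TX^2)$, or (ii) $TX^1\in SC_i^m$, $TX^2\in SC_i^n$ with $m<n$, or (iii) $TX^1\in SC_i^m$, $TX^2\in SC_j^n$ with $f_{bt}(SC_i^m)<f_{bt}(SC_j^n)$. Execution order: $TX^1_{\mapsto\epsilon_1}\prec_{\mathbf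 E}TX^2_{\mapsto\epsilon_2}$ if for every $\epsilon_k\in\Upsilon(TX^1_{\mapsto\epsilon_1})\cap\Upsilon(TX^2_{\mapsto\epsilon_2})$ the sub-transaction $TX^1_{\mapsto\epsilon_1,\epsilon_k}$ is executed before $TX^2_{\mapsto\epsilon_2,\epsilon_k}$. Haechi protocol for order-sensitive-contract transactions (OTXs): (1) Processing: a sender shard processes an OTX (e.g. withdraws the sender's funds) in a block, and for each block at height $h$ sends the beacon chain a certified CrossLink $\langle blockTS, L_{tx}, i, h\rangle$ containing the block's valid new OTXs in block order. (2) Ordering: the beacon chain keeps, for each shard $i$, a sequence $shardCLs[i]$ of received CrossLinks of consecutive heights (out-of-order ones buffered), and $shardLastTS[i]$, the timestamp of its last element; once all $shardCLs[i]$ are nonempty, it selects the CrossLinks with $blockTS\le\min_i shardLastTS[i]$ and orders their OTXs by block timestamp, then by index in the CrossLink, agreeing on this via BFT consensus, and sends to each contract shard the ordered list of OTXs calling its contracts. (3) Execution: contract shards execute the called contracts in the received order. (4) Commitment: the sender shard commits or aborts each OTX based on execution results and notifies involved shards. *)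

theory Defs
  imports Complex_Main
begin

text \<open>
Sender shards are 1..m.  blk i h is the list L_tx of valid new OTXs of block SC_i^h
(in block order, so list position order = f_idx order); ts i h = f_bt(SC_i^h).
A position is a triple (i, h, k): shard, height, index in the block.
\<close>

definition valid_pos :: "nat \<Rightarrow> (nat \<Rightarrow> nat \<Rightarrow> 'tx list) \<Rightarrow> nat \<times> nat \<times> nat \<Rightarrow> bool" where
  "valid_pos m blk p = (case p of (i, h, k) \<Rightarrow> 1 \<le> i \<and> i \<le> m \<and> k < length (blk i h))"

definition tx_at :: "(nat \<Rightarrow> nat \<Rightarrow> 'tx list) \<Rightarrow> nat \<times> nat \<times> nat \<Rightarrow> 'tx" where
  "tx_at blk p = (case p of (i, h, k) \<Rightarrow> blk i h ! k)"

definition unique_positions :: "nat \<Rightarrow> (nat \<Rightarrow> nat \<Rightarrow> 'tx list) \<Rightarrow> bool" where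
  "unique_positions m blk = (\<forall>p q. valid_pos m blk p \<and> valid_pos m blk q \<and> tx_at blk p = tx_at blk q \<longrightarrow> p = q)"

definition proc_before :: "nat \<Rightarrow> (nat \<Rightarrow> nat \<Rightarrow> real) \<Rightarrow> (nat \<Rightarrow> nat \<Rightarrow> 'tx list) \<Rightarrow> 'tx \<Rightarrow> 'tx \<Rightarrow> bool" where
  "proc_before m ts blk tx1 tx2 =
     (\<exists>i h k j h' k'. valid_pos m blk (i, h, k) \<and> valid_pos m blk (j, h', k') \<and>
        tx_at blk (i, h, k) = tx1 \<and> tx_at blk (j, h', k') = tx2 \<and>
        ((i = j \<and> h = h' \<and> k < k') \<or> (i = j \<and> h < h') \<or> ts i h < ts j h'))"

text \<open>Beacon chain: at round r it has received CrossLinks of heights 0..<n r i of each shard i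
(consecutive heights; nonempty). Threshold = min_i shardLastTS[i].\<close>
definition threshold :: "nat \<Rightarrow> (nat \<Rightarrow> nat \<Rightarrow> real) \<Rightarrow> (nat \<Rightarrow> nat \<Rightarrow> nat) \<Rightarrow> nat \<Rightarrow> real" where
  "threshold m ts n r = Min ((\<lambda>i. ts i (n r i - 1)) ` {1..m})"

definition eligible :: "nat \<Rightarrow> (nat \<Rightarrow> nat \<Rightarrow> real) \<Rightarrow> (nat \<Rightarrow> nat \<Rightarrow> nat) \<Rightarrow> nat \<Rightarrow> (nat \<times> nat) set" where
  "eligible m ts n r = {(i, h). 1 \<le> i \<and> i \<le> m \<and> h < n r i \<and> ts i h \<le> threshold m ts n r}"

definition selected :: "nat \<Rightarrow> (nat \<Rightarrow> nat \<Rightarrow> real) \<Rightarrow> (nat \<Rightarrow> nat \<Rightarrow> nat) \<Rightarrow> nat \<Rightarrow> (nat \<times> nat) set" where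
  "selected m ts n r = eligible m ts n r - (\<Union>r'<r. eligible m ts n r')"

definition key_le :: "(nat \<Rightarrow> nat \<Rightarrow> real) \<Rightarrow> nat \<times> nat \<times> nat \<Rightarrow> nat \<times> nat \<times> nat \<Rightarrow> bool" where
  "key_le ts p q = (case p of (i, h, k) \<Rightarrow> case q of (j, h', k') \<Rightarrow>
       ts i h < ts j h' \<or> (ts i h = ts j h' \<and> k \<le> k'))"

definition haechi_run :: "nat \<Rightarrow> (nat \<Rightarrow> nat \<Rightarrow> real) \<Rightarrow> (nat \<Rightarrow> nat \<Rightarrow> 'tx list)
      \<Rightarrow> (nat \<Rightarrow> nat \<Rightarrow> nat) \<Rightarrow> nat \<Rightarrow> (nat \<Rightarrow> (nat \<times> nat \<times> nat) list) \<Rightarrow> bool" where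
  "haechi_run m ts blk n R L =
     ((\<forall>r i. n r i \<le> n (Suc r) i) \<and>
      (\<forall>r<R. \<forall>i\<in>{1..m}. 1 \<le> n r i) \<and>
      (\<forall>r<R. distinct (L r) \<and>
         set (L r) = {(i, h, k). (i, h) \<in> selected m ts n r \<and> k < length (blk i h)} \<and>
         sorted_wrt (key_le ts) (L r)))"

definition global_order :: "(nat \<Rightarrow> nat \<Rightarrow> 'tx list) \<Rightarrow> nat \<Rightarrow> (nat \<Rightarrow> (nat \<times> nat \<times> nat) list) \<Rightarrow> 'tx list" where
  "global_order blk R L = concat (map (\<lambda>r. map (tx_at blk) (L r)) [0..<R])"

text \<open>Contract shard hosting contract c receives the OTXs calling c, in order, and executes them in that order.\<close>
definition received :: "('tx \<Rightarrow> 'c set) \<Rightarrow> 'tx list \<Rightarrow> 'c \<Rightarrow> 'tx list" where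
  "received Ups G c = filter (\<lambda>tx. c \<in> Ups tx) G"

definition executed_before :: "('tx \<Rightarrow> 'c set) \<Rightarrow> 'tx list \<Rightarrow> 'c \<Rightarrow> 'tx \<Rightarrow> 'tx \<Rightarrow> bool" where
  "executed_before Ups G c tx1 tx2 =
     (\<exists>p q. p < q \<and> q < length (received Ups G c) \<and>
        received Ups G c ! p = tx1 \<and> received Ups G c ! q = tx2)"

definition exec_before :: "('tx \<Rightarrow> 'c set) \<Rightarrow> 'tx list \<Rightarrow> 'tx \<Rightarrow> 'tx \<Rightarrow> bool" where
  "exec_before Ups G tx1 tx2 = (\<forall>c \<in> Ups tx1 \<inter> Ups tx2. executed_before Ups G c tx1 tx2)"

end

theory Submission
  imports Defs
begin

text \<open>
The beacon chain only releases CrossLinks whose timestamp is at most the minimum over all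
shards of the last received timestamp. If a block B of shard i has timestamp at most that of
a block released in round r, it is also below the threshold of round r; since timestamps
increase along shard i and the last received block of shard i is itself above the threshold,
B has already been received, so B is released in round r or earlier. Hence the rounds respect
timestamps, inside a round the agreed order respects (timestamp, index), and filtering the
global order per contract preserves relative order.
\<close>

definition occurs_before :: "'a list \<Rightarrow> 'a \<Rightarrow> 'a \<Rightarrow> bool" where
  "occurs_before xs a b \<longleftrightarrow> (\<exists>ys zs. xs = ys @ a # zs \<and> b \<in> set zs)"

lemma occurs_before_append_left:
  "occurs_before xs a b \<Longrightarrow> occurs_before (xs @ ys) a b"
  unfolding occurs_before_def by force

lemma occurs_before_append_right:
  "occurs_before ys a b \<Longrightarrow> occurs_before (xs @ ys) a b"
  unfolding occurs_before_def by (metis append.assoc)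

lemma occurs_before_append_across:
  assumes "a \<in> set xs" "b \<in> set ys"
  shows "occurs_before (xs @ ys) a b"
proof -
  obtain us vs where "xs = us @ a # vs" using assms(1) by (meson split_list)
  with assms(2) show ?thesis unfolding occurs_before_def by force
qed

lemma occurs_before_map:
  "occurs_before xs a b \<Longrightarrow> occurs_before (map f xs) (f a) (f b)"
  unfolding occurs_before_def by force

lemma occurs_before_filter:
  "occurs_before xs a b \<Longrightarrow> P a \<Longrightarrow> P b \<Longrightarrow> occurs_before (filter P xs) a b"
  unfolding occurs_before_def by force

lemma occurs_before_nth:
  assumes "occurs_before xs a b"
  shows "\<exists>p q. p < q \<and> q < length xs \<and> xs ! p = a \<and> xs ! q = b"
proof -
  obtain ys zs where xs: "xs = ys @ a # zs" and "b \<in> set zs"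
    using assms unfolding occurs_before_def by blast
  then obtain t where "t < length zs" "zs ! t = b" by (metis in_set_conv_nth)
  with xs show ?thesis
    by (intro exI[of _ "length ys"] exI[of _ "length ys + Suc t"]) (simp add: nth_append)
qed

lemma occurs_before_if_sorted_wrt:
  assumes "sorted_wrt R xs" "reflp R" "a \<in> set xs" "b \<in> set xs" "\<not> R b a"
  shows "occurs_before xs a b"
proof -
  obtain ys zs where xs: "xs = ys @ a # zs" using assms(3) by (meson split_list)
  have "b \<notin> set ys" using assms(1,5) xs by (auto simp: sorted_wrt_append)
  moreover have "b \<noteq> a" using assms(2,5) by (auto simp: reflp_def)
  ultimately show ?thesis using assms(4) xs unfolding occurs_before_def by auto
qed

lemma concat_map_upt_split:
  "r < R \<Longrightarrow> concat (map f [0..<R]) = concat (map f [0..<r]) @ f r @ concat (map f [Suc r..<R])"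
proof -
  assume "r < R"
  then have "[0..<R] = [0..<r] @ r # [Suc r..<R]"
    by (metis le_add_diff_inverse less_imp_le_nat upt_add_eq_append upt_conv_Cons zero_le)
  then show ?thesis by simp
qed

lemma occurs_before_concat_same:
  "r < R \<Longrightarrow> occurs_before (f r) a b \<Longrightarrow> occurs_before (concat (map f [0..<R])) a b"
  by (simp add: concat_map_upt_split occurs_before_append_left occurs_before_append_right)

lemma occurs_before_concat_less:
  assumes "r1 < r2" "r2 < R" "a \<in> set (f r1)" "b \<in> set (f r2)"
  shows "occurs_before (concat (map f [0..<R])) a b"
proof -
  have "b \<in> set (concat (map f [Suc r1..<R]))" using assms by auto
  with assms(3) have "occurs_before (f r1 @ concat (map f [Suc r1..<R])) a b"
    by (rule occurs_before_append_across)
  then show ?thesis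
    unfolding concat_map_upt_split[OF less_trans[OF assms(1,2)]]
    by (rule occurs_before_append_right)
qed

lemma executed_before_if_occurs_before:
  assumes "occurs_before G tx1 tx2" "c \<in> Ups tx1" "c \<in> Ups tx2"
  shows "executed_before Ups G c tx1 tx2"
  using occurs_before_nth[OF occurs_before_filter[OF assms]]
  unfolding executed_before_def received_def .

lemma exec_before_if_occurs_before:
  "occurs_before G tx1 tx2 \<Longrightarrow> exec_before Ups G tx1 tx2"
  by (simp add: exec_before_def executed_before_if_occurs_before)

lemma reflp_key_le: "reflp (key_le ts)"
  by (simp add: reflp_def key_le_def)

lemma not_key_le_if_proc_order:
  assumes "strict_mono (ts i)"
    and "(i = j \<and> h = h' \<and> k < k') \<or> (i = j \<and> h < h') \<or> ts i h < ts j h'"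
  shows "\<not> key_le ts (j, h', k') (i, h, k)"
proof -
  have "ts i h < ts j h' \<or> (ts i h = ts j h' \<and> k < k')"
    using assms by (auto simp: strict_mono_less)
  then show ?thesis by (auto simp: key_le_def)
qed

lemma ts_le_if_not_key_le: "\<not> key_le ts (j, h', k') (i, h, k) \<Longrightarrow> ts i h \<le> ts j h'"
  by (auto simp: key_le_def)

lemma eligible_downward_closed:
  assumes "(j, h') \<in> eligible m ts n r" "ts i h \<le> ts j h'"
    and "strict_mono (ts i)" "i \<in> {1..m}" "1 \<le> n r i"
  shows "(i, h) \<in> eligible m ts n r"
proof -
  have "threshold m ts n r \<le> ts i (n r i - 1)"
    unfolding threshold_def using assms(4) by (intro Min_le) auto
  with assms(1,2) have below: "ts i h \<le> threshold m ts n r" "ts i h \<le> ts i (n r i - 1)"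
    by (auto simp: eligible_def)
  from below(2) have "h \<le> n r i - 1" using assms(3) by (simp add: strict_mono_less_eq)
  with assms(4,5) below(1) show ?thesis by (auto simp: eligible_def)
qed

lemma haechi_run_set_L:
  "haechi_run m ts blk n R L \<Longrightarrow> r < R \<Longrightarrow>
    set (L r) = {(i, h, k). (i, h) \<in> selected m ts n r \<and> k < length (blk i h)}"
  by (simp add: haechi_run_def)

lemma haechi_run_received:
  "haechi_run m ts blk n R L \<Longrightarrow> r < R \<Longrightarrow> i \<in> {1..m} \<Longrightarrow> 1 \<le> n r i"
  by (simp add: haechi_run_def)

lemma haechi_run_valid_pos:
  "haechi_run m ts blk n R L \<Longrightarrow> r < R \<Longrightarrow> p \<in> set (L r) \<Longrightarrow> valid_pos m blk p"
  by (auto simp: haechi_run_set_L valid_pos_def selected_def eligible_def)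

lemma haechi_run_selected_round_le:
  assumes run: "haechi_run m ts blk n R L" and "strict_mono (ts i)" "i \<in> {1..m}" "r2 < R"
    and "(i, h) \<in> selected m ts n r1" "(j, h') \<in> selected m ts n r2" "ts i h \<le> ts j h'"
  shows "r1 \<le> r2"
proof (rule ccontr)
  assume "\<not> r1 \<le> r2"
  have "(j, h') \<in> eligible m ts n r2" using assms(6) by (simp add: selected_def)
  then have "(i, h) \<in> eligible m ts n r2"
    using assms(7,2,3) haechi_run_received[OF run assms(4,3)] by (rule eligible_downward_closed)
  with \<open>\<not> r1 \<le> r2\<close> have "(i, h) \<in> (\<Union>r'<r1. eligible m ts n r')" by auto
  with assms(5) show False by (simp add: selected_def)
qed

lemma haechi_run_occurs_before:
  assumes run: "haechi_run m ts blk n R L" and mono: "\<And>i. strict_mono (ts i)"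
    and "r1 < R" "r2 < R" "p1 \<in> set (L r1)" "p2 \<in> set (L r2)" "\<not> key_le ts p2 p1"
  shows "occurs_before (concat (map L [0..<R])) p1 p2"
proof -
  obtain i h k j h' k' where p: "p1 = (i, h, k)" "p2 = (j, h', k')" by (cases p1, cases p2)
  have "i \<in> {1..m}" using haechi_run_valid_pos[OF run] assms(3,5) p by (auto simp: valid_pos_def)
  then have "r1 \<le> r2"
    using assms(3-7) p haechi_run_set_L[OF run] ts_le_if_not_key_le
    by (intro haechi_run_selected_round_le[OF run mono]) auto
  then consider (same_round) "r1 = r2" | (earlier_round) "r1 < r2" by linarith
  then show ?thesis
  proof cases
    case same_round
    have "sorted_wrt (key_le ts) (L r1)" using run assms(3) by (simp add: haechi_run_def)
    with same_round assms(3-7) show ?thesis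
      by (intro occurs_before_concat_same occurs_before_if_sorted_wrt[OF _ reflp_key_le]) auto
  next
    case earlier_round
    from earlier_round assms(4-6) show ?thesis by (rule occurs_before_concat_less)
  qed
qed

lemma global_order_eq_map_concat:
  "global_order blk R L = map (tx_at blk) (concat (map L [0..<R]))"
  by (simp add: global_order_def map_concat comp_def)

lemma global_order_position:
  assumes "haechi_run m ts blk n R L" "unique_positions m blk" "valid_pos m blk p"
    and "tx_at blk p \<in> set (global_order blk R L)"
  shows "\<exists>r<R. p \<in> set (L r)"
proof -
  obtain r q where "r < R" "q \<in> set (L r)" "tx_at blk q = tx_at blk p"
    using assms(4) by (auto simp: global_order_def)
  moreover from this have "q = p"
    using assms(2,3) haechi_run_valid_pos[OF assms(1)] unfolding unique_positions_def by blast
  ultimately show ?thesis by blast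
qed

theorem theorem1:
  fixes m :: nat and ts :: "nat \<Rightarrow> nat \<Rightarrow> real" and blk :: "nat \<Rightarrow> nat \<Rightarrow> 'tx list"
    and n :: "nat \<Rightarrow> nat \<Rightarrow> nat" and R :: nat and L :: "nat \<Rightarrow> (nat \<times> nat \<times> nat) list"
    and Ups :: "'tx \<Rightarrow> 'c set" and \<epsilon> :: 'c and tx1 tx2 :: 'tx
  assumes "1 \<le> m"
    and "\<forall>i h. ts i h < ts i (Suc h)"
    and "unique_positions m blk"
    and "haechi_run m ts blk n R L"
    and "tx1 \<in> set (global_order blk R L)" and "tx2 \<in> set (global_order blk R L)"
    and "\<epsilon> \<in> Ups tx1 \<inter> Ups tx2"
    and "proc_before m ts blk tx1 tx2"
  shows "exec_before Ups (global_order blk R L) tx1 tx2"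
proof -
  have mono: "strict_mono (ts i)" for i using assms(2) by (simp add: strict_mono_Suc_iff)
  obtain i h k j h' k' where p:
      "valid_pos m blk (i, h, k)" "valid_pos m blk (j, h', k')"
      "tx_at blk (i, h, k) = tx1" "tx_at blk (j, h', k') = tx2"
      "(i = j \<and> h = h' \<and> k < k') \<or> (i = j \<and> h < h') \<or> ts i h < ts j h'"
    using assms(8) unfolding proc_before_def by blast
  obtain r1 where "r1 < R" "(i, h, k) \<in> set (L r1)"
    using global_order_position[OF assms(4,3) p(1)] p(3) assms(5) by blast
  moreover obtain r2 where "r2 < R" "(j, h', k') \<in> set (L r2)"
    using global_order_position[OF assms(4,3) p(2)] p(4) assms(6) by blast
  ultimately have "occurs_before (concat (map L [0..<R])) (i, h, k) (j, h', k')"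
    using haechi_run_occurs_before[OF assms(4) mono] not_key_le_if_proc_order[OF mono p(5)]
    by blast
  then have "occurs_before (global_order blk R L) tx1 tx2"
    using occurs_before_map p(3,4) by (fastforce simp: global_order_eq_map_concat)
  then show ?thesis by (rule exec_before_if_occurs_before)
qed

end
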